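(* Let $q>1$ be real. Then: (i) for each $r\in(1,q)$, the set $$G_{r,q}:=\Bigl\{\sum_{i=1}^\infty \frac{b_i(x,r)}{q^i}: x\in J_r\Bigr\}$$ has Hausdorff dimension $\log r/\log q$; (ii) the set $G_q:=\bigcup_{r\in(1,q)}G_{r,q}$ is of first category, has Lebesgue measure zero and has Hausdorff dimension one.
   Context: For real $p>1$ let $\lceil p\rceil$ be the smallest integer $\ge p$, $A_p=\{0,\ldots,\lceil p\rceil-1\}$ and $J_p=[0,(\lceil p\rceil-1)/(p-1)]$. For $x\in J_p$ the greedy expansion $(b_i(x,p))$ of $x$ in base $p$ is defined recursively: $b_n(x,p)$ is the largest element of $A_p$ with $\sum_{i=1}^n b_i(x,p)p^{-i}\le x$; it satisfies $x=\sum_i b_i(x,p)p^{-i}$. *)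

theory Defs
  imports "HOL-Analysis.Analysis"
begin

definition greedy_interval :: "real \<Rightarrow> real set" where
  "greedy_interval p = {0 .. (real_of_int \<lceil>p\<rceil> - 1) / (p - 1)}"

text \<open>greedy_psum p x n = sum_{i=1}^n b_i(x,p) p^{-i}\<close>
fun greedy_psum :: "real \<Rightarrow> real \<Rightarrow> nat \<Rightarrow> real" where
  "greedy_psum p x 0 = 0"
| "greedy_psum p x (Suc n) = greedy_psum p x n +
     real (GREATEST d. d \<le> nat \<lceil>p\<rceil> - 1 \<and> greedy_psum p x n + real d / p ^ Suc n \<le> x) / p ^ Suc n"

text \<open>greedy_digit p x n = b_n(x,p), for n \<ge> 1 (the value at n = 0 is irrelevant)\<close>
definition greedy_digit :: "real \<Rightarrow> real \<Rightarrow> nat \<Rightarrow> nat" where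
  "greedy_digit p x n =
     (GREATEST d. d \<le> nat \<lceil>p\<rceil> - 1 \<and> greedy_psum p x (n - 1) + real d / p ^ n \<le> x)"

definition G_set :: "real \<Rightarrow> real \<Rightarrow> real set" where
  "G_set r q = (\<lambda>x. \<Sum>i. real (greedy_digit r x (Suc i)) / q ^ Suc i) ` greedy_interval r"

definition hausdorff_content :: "real \<Rightarrow> real \<Rightarrow> 'a::metric_space set \<Rightarrow> ennreal" where
  "hausdorff_content s \<delta> A =
     (INF U \<in> {U :: nat \<Rightarrow> 'a set. A \<subseteq> (\<Union>i. U i) \<and> (\<forall>i. bounded (U i) \<and> diameter (U i) \<le> \<delta>)}.
        \<Sum>i. ennreal (diameter (U i) powr s))"

definition hausdorff_measure :: "real \<Rightarrow> 'a::metric_space set \<Rightarrow> ennreal" where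
  "hausdorff_measure s A = (SUP \<delta> \<in> {0<..}. hausdorff_content s \<delta> A)"

definition hausdorff_dim :: "'a::metric_space set \<Rightarrow> ereal" where
  "hausdorff_dim A = Inf {ereal s | s. 0 \<le> s \<and> hausdorff_measure s A = 0}"

definition nowhere_dense :: "'a::topological_space set \<Rightarrow> bool" where
  "nowhere_dense S \<longleftrightarrow> interior (closure S) = {}"

definition first_category :: "'a::topological_space set \<Rightarrow> bool" where
  "first_category A \<longleftrightarrow> (\<exists>F. countable F \<and> (\<forall>S\<in>F. nowhere_dense S) \<and> A = \<Union>F)"

end

theory Submission
  imports Defs
begin

text \<open>For r < q, a non-maximal greedy digit forces the remaining digits of x to have r-adic
  tail value below 1. Hence, for bases r \<le> t with a common digit bound, the length-m prefixes of
  distinct greedy expansions, read in a base b > t, are (1 - t/b) b^-m apart, so there are only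
  O(b^m) of them. This covers the corresponding part of G_q by O(b^m) intervals of length
  O(q^-m), which gives Hausdorff measure zero in dimension s when b < q^s and a null closure
  when b < q. Conversely, x \<mapsto> \<Sum> b_i(x,r) q^-i is injective on J_r and the preimage of a
  set of diameter d lies in an interval of length O(d^(log r / log q)), so Lebesgue measure on J_r
  forces positive Hausdorff measure up to dimension log r / log q. Finally G_q is a countable
  union of pieces with null closure, and it contains G_{q^s,q} for every s < 1.\<close>

section \<open>General facts on sums, covers, Hausdorff measure and dimension\<close>

lemma sum_lessThan_split_at:
  fixes f :: "nat \<Rightarrow> 'a::comm_monoid_add"
  assumes "k < m"
  shows "(\<Sum>i<m. f i) = (\<Sum>i<k. f i) + f k + (\<Sum>i\<in>{k<..<m}. f i)"
  using assms
proof (induction m)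
  case (Suc m)
  show ?case
  proof (cases "k < m")
    case True
    then have "{k<..<Suc m} = insert m {k<..<m}" by auto
    with Suc True show ?thesis by (simp add: ac_simps)
  next
    case False
    with Suc have "m = k" by simp
    moreover have "{k<..<Suc k} = {}" by auto
    ultimately show ?thesis by simp
  qed
qed simp

lemma sum_shift_power:
  fixes b :: real
  assumes "b \<noteq> 0"
  shows "(\<Sum>i\<in>{k<..<m}. u i / b ^ Suc i) = (\<Sum>i\<in>{k<..<m}. u i / b ^ (i - k)) / b ^ Suc k"
  unfolding sum_divide_distrib
proof (rule sum.cong[OF refl])
  fix i assume "i \<in> {k<..<m}"
  then have "b ^ Suc i = b ^ (i - k) * b ^ Suc k" by (simp flip: power_add)
  then show "u i / b ^ Suc i = u i / b ^ (i - k) / b ^ Suc k" by simp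
qed

lemma power_powr:
  fixes x :: real
  assumes "0 < x"
  shows "(x ^ n) powr s = (x powr s) ^ n"
proof -
  have "(x ^ n) powr s = (x powr real n) powr s" using assms by (simp add: powr_realpow)
  also have "\<dots> = x powr (real n * s)" by (simp add: powr_powr)
  also have "\<dots> = (x powr s) ^ n" using assms by (simp add: powr_power)
  finally show ?thesis .
qed

lemma ex_power_bracket:
  fixes q c d :: real
  assumes "1 < q" "0 < d" "d < c"
  shows "\<exists>m. c / q ^ Suc m \<le> d \<and> d < c / q ^ m"
proof -
  have "(\<lambda>n. c * (1 / q) ^ n) \<longlonglongrightarrow> 0"
    using assms by (intro tendsto_mult_right_zero LIMSEQ_power_zero) auto
  then obtain n where "c * (1 / q) ^ n < d"
    using \<open>0 < d\<close> by (metis order_tendstoD(2) eventually_sequentially order_refl)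
  then have ex: "c / q ^ n \<le> d" by (simp add: power_divide)
  define N where "N = (LEAST n. c / q ^ n \<le> d)"
  have N: "c / q ^ N \<le> d" unfolding N_def using ex by (rule LeastI)
  have "N \<noteq> 0"
  proof
    assume "N = 0"
    then show False using N \<open>d < c\<close> by simp
  qed
  then obtain m where "N = Suc m" by (cases N) auto
  moreover have "\<not> c / q ^ m \<le> d"
    using not_less_Least[of m "\<lambda>n. c / q ^ n \<le> d"] \<open>N = Suc m\<close> N_def by simp
  ultimately show ?thesis using N by auto
qed

lemma card_separated_le:
  fixes A :: "real set"
  assumes "finite A" and sub: "A \<subseteq> {0..L}" and "0 < \<delta>" "0 \<le> L"
    and sep: "\<And>x y. x \<in> A \<Longrightarrow> y \<in> A \<Longrightarrow> x \<noteq> y \<Longrightarrow> \<delta> \<le> \<bar>x - y\<bar>"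
  shows "real (card A) \<le> L / \<delta> + 1"
proof -
  define g where "g x = nat \<lfloor>x / \<delta>\<rfloor>" for x
  have "inj_on g A"
  proof (rule inj_onI)
    fix x y assume xy: "x \<in> A" "y \<in> A" "g x = g y"
    have "0 \<le> x / \<delta>" "0 \<le> y / \<delta>" using xy sub \<open>0 < \<delta>\<close> by auto
    then have "\<lfloor>x / \<delta>\<rfloor> = \<lfloor>y / \<delta>\<rfloor>"
      using xy(3) unfolding g_def by (metis eq_nat_nat_iff zero_le_floor)
    then have "\<bar>x / \<delta> - y / \<delta>\<bar> < 1" by linarith
    then have "\<bar>x - y\<bar> < \<delta>" using \<open>0 < \<delta>\<close> by (simp add: diff_divide_distrib[symmetric] abs_divide)
    then show "x = y" using sep xy by force
  qed
  moreover have "g ` A \<subseteq> {0..nat \<lfloor>L / \<delta>\<rfloor>}"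
  proof (clarsimp simp: g_def)
    fix x assume "x \<in> A"
    then have "x \<le> L" using sub by auto
    then show "nat \<lfloor>x / \<delta>\<rfloor> \<le> nat \<lfloor>L / \<delta>\<rfloor>"
      using \<open>0 < \<delta>\<close> by (intro nat_mono floor_mono divide_right_mono) auto
  qed
  ultimately have "card A \<le> nat \<lfloor>L / \<delta>\<rfloor> + 1"
    using card_mono[of "{0..nat \<lfloor>L / \<delta>\<rfloor>}" "g ` A"] card_image[of g A] by simp
  then have "real (card A) \<le> real (nat \<lfloor>L / \<delta>\<rfloor>) + 1" by linarith
  also have "real (nat \<lfloor>L / \<delta>\<rfloor>) \<le> L / \<delta>" using assms by simp
  finally show ?thesis by simp
qed

lemma hausdorff_content_le_finite_cover:
  fixes A :: "'a::metric_space set" and S :: "'b \<Rightarrow> 'a set"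
  assumes "finite F" and cover: "A \<subseteq> (\<Union>j\<in>F. S j)" and "0 \<le> \<delta>"
    and small: "\<And>j. j \<in> F \<Longrightarrow> bounded (S j) \<and> diameter (S j) \<le> \<delta>"
  shows "hausdorff_content s \<delta> A \<le> (\<Sum>j\<in>F. ennreal (diameter (S j) powr s))"
proof -
  obtain n :: nat and g where F: "F = g ` {..<n}" and inj: "inj_on g {..<n}"
    using finite_imp_nat_seg_image_inj_on[OF \<open>finite F\<close>] unfolding lessThan_def by blast
  define U where "U i = (if i < n then S (g i) else {})" for i
  have "A \<subseteq> (\<Union>i. U i)"
  proof
    fix x assume "x \<in> A"
    then obtain i where "i < n" "x \<in> S (g i)" using cover by (auto simp: F)
    then show "x \<in> (\<Union>i. U i)" by (auto simp: U_def)
  qed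
  moreover have "bounded (U i) \<and> diameter (U i) \<le> \<delta>" for i
    using small \<open>0 \<le> \<delta>\<close> by (simp add: F U_def)
  ultimately have "hausdorff_content s \<delta> A \<le> (\<Sum>i. ennreal (diameter (U i) powr s))"
    unfolding hausdorff_content_def by (intro INF_lower) blast
  also have "\<dots> = (\<Sum>i<n. ennreal (diameter (U i) powr s))"
    by (rule suminf_finite) (auto simp: U_def)
  also have "\<dots> = (\<Sum>j\<in>F. ennreal (diameter (S j) powr s))"
    by (simp add: F sum.reindex[OF inj] U_def)
  finally show ?thesis .
qed

definition small_interval_covers :: "real \<Rightarrow> real set \<Rightarrow> bool" where
  "small_interval_covers s A \<longleftrightarrow> (\<forall>e>0. \<forall>\<delta>>0. \<exists>F L. finite F \<and> 0 \<le> L \<and> L \<le> \<delta>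
     \<and> A \<subseteq> (\<Union>a\<in>F. {a .. a + L}) \<and> real (card F) * L powr s < e)"

lemma hausdorff_measure_zero_if_small_interval_covers:
  assumes "small_interval_covers s A"
  shows "hausdorff_measure s A = 0"
proof -
  have "hausdorff_content s \<delta> A = 0" if "0 < \<delta>" for \<delta>
  proof (rule antisym[OF ennreal_le_epsilon zero_le])
    fix e :: real assume "0 < e"
    then obtain F L where F: "finite F" "0 \<le> L" "L \<le> \<delta>" "A \<subseteq> (\<Union>a\<in>F. {a .. a + L})"
      and small: "real (card F) * L powr s < e"
      using assms[unfolded small_interval_covers_def, rule_format, OF \<open>0 < e\<close> \<open>0 < \<delta>\<close>] by blast
    have "hausdorff_content s \<delta> A \<le> (\<Sum>a\<in>F. ennreal (diameter {a .. a + L} powr s))"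
      by (rule hausdorff_content_le_finite_cover[OF F(1) F(4)]) (use F(2,3) in auto)
    also have "\<dots> = (\<Sum>a\<in>F. ennreal (L powr s))" using \<open>0 \<le> L\<close> by simp
    also have "\<dots> = ennreal (real (card F) * L powr s)"
      by (simp add: ennreal_of_nat_eq_real_of_nat ennreal_mult)
    also have "\<dots> \<le> 0 + ennreal e" using small by (simp add: ennreal_leI)
    finally show "hausdorff_content s \<delta> A \<le> 0 + ennreal e" .
  qed
  then show ?thesis by (simp add: hausdorff_measure_def)
qed

lemma closure_null_if_small_interval_covers:
  assumes "small_interval_covers 1 A"
  shows "closure A \<in> null_sets lborel"
proof -
  have "emeasure lborel (closure A) \<le> 0 + ennreal e" if "0 < e" for e
  proof -
    obtain F L where F: "finite F" "0 \<le> L" "A \<subseteq> (\<Union>a\<in>F. {a .. a + L})"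
      and small: "real (card F) * L < e"
      using assms \<open>0 < e\<close> unfolding small_interval_covers_def by (force simp: powr_one)
    have "closure A \<subseteq> (\<Union>a\<in>F. {a .. a + L})"
      using F by (intro closure_minimal) auto
    moreover have "(\<Union>a\<in>F. {a .. a + L}) \<in> sets lborel"
      using F(1) by (intro sets.finite_UN) auto
    ultimately have "emeasure lborel (closure A) \<le> emeasure lborel (\<Union>a\<in>F. {a .. a + L})"
      by (rule emeasure_mono)
    also have "\<dots> \<le> (\<Sum>a\<in>F. emeasure lborel {a .. a + L})"
      using F by (intro emeasure_subadditive_finite) auto
    also have "\<dots> = ennreal (real (card F) * L)"
      using \<open>0 \<le> L\<close> by (simp add: ennreal_of_nat_eq_real_of_nat ennreal_mult)
    also have "\<dots> \<le> 0 + ennreal e" using small by (simp add: ennreal_leI)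
    finally show ?thesis .
  qed
  then have "emeasure lborel (closure A) = 0"
    by (intro antisym[OF ennreal_le_epsilon zero_le]) auto
  then show ?thesis by auto
qed

lemma nowhere_dense_if_closure_null:
  fixes S :: "real set"
  assumes "closure S \<in> null_sets lborel"
  shows "nowhere_dense S"
  unfolding nowhere_dense_def
proof (rule ccontr)
  assume "interior (closure S) \<noteq> {}"
  then obtain x e where "0 < e" "ball x e \<subseteq> closure S" by (meson ex_in_conv mem_interior)
  then have "{x - e/2 .. x + e/2} \<subseteq> closure S" by (force simp: dist_real_def)
  then have "emeasure lborel {x - e/2 .. x + e/2} \<le> emeasure lborel (closure S)"
    by (intro emeasure_mono) auto
  with assms \<open>0 < e\<close> show False by auto
qed

lemma first_category_null_if_closures_null:
  fixes S :: "'i::countable \<Rightarrow> real set"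
  assumes "\<And>i. closure (S i) \<in> null_sets lborel"
  shows "first_category (\<Union>i. S i)" and "(\<Union>i. S i) \<in> null_sets lebesgue"
proof -
  show "first_category (\<Union>i. S i)"
    unfolding first_category_def using assms nowhere_dense_if_closure_null
    by (intro exI[of _ "range S"]) auto
  have "(\<Union>i. closure (S i)) \<in> null_sets lebesgue"
    using assms by (intro null_sets_completionI null_sets_UN)
  moreover have "(\<Union>i. S i) \<subseteq> (\<Union>i. closure (S i))" using closure_subset by blast
  ultimately show "(\<Union>i. S i) \<in> null_sets lebesgue" by (rule null_sets_completion_subset[rotated])
qed

lemma small_interval_covers_bounded:
  fixes A :: "real set"
  assumes "1 < s" and "bounded A"
  shows "small_interval_covers s A"
  unfolding small_interval_covers_def
proof (intro allI impI)
  fix e \<delta> :: real assume "0 < e" "0 < \<delta>"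
  obtain a where "A \<subseteq> {-a..a}" using bounded_subset_cbox_symmetric[OF \<open>bounded A\<close>] by auto
  define L where "L = 2 * \<bar>a\<bar> + 1"
  have "0 < L" by (simp add: L_def)
  have A: "A \<subseteq> {-\<bar>a\<bar> .. -\<bar>a\<bar> + L}" using \<open>A \<subseteq> {-a..a}\<close> by (auto simp: L_def)
  have "(\<lambda>N. 2 * L powr s * real N powr (1 - s)) \<longlonglongrightarrow> 0"
    by (intro tendsto_mult_right_zero tendsto_neg_powr filterlim_real_sequentially) (use \<open>1 < s\<close> in auto)
  moreover have "(\<lambda>N. L / real N) \<longlonglongrightarrow> 0"
    by (intro tendsto_divide_0[OF tendsto_const] filterlim_at_top_imp_at_infinity filterlim_real_sequentially)
  ultimately have "\<forall>\<^sub>F N in sequentially.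
      (2 * L powr s * real N powr (1 - s) < e \<and> L / real N < \<delta>) \<and> 1 \<le> N"
    using \<open>0 < e\<close> \<open>0 < \<delta>\<close> by (intro eventually_conj order_tendstoD(2) eventually_ge_at_top)
  then obtain N :: nat where N: "2 * L powr s * real N powr (1 - s) < e" "L / real N < \<delta>" "1 \<le> N"
    unfolding eventually_sequentially by blast
  define h where "h = L / real N"
  have "0 < h" using N(3) \<open>0 < L\<close> by (simp add: h_def)
  define F where "F = (\<lambda>k. -\<bar>a\<bar> + real k * h) ` {..N}"
  have cover: "A \<subseteq> (\<Union>c\<in>F. {c .. c + h})"
  proof
    fix x assume "x \<in> A"
    then have "0 \<le> x + \<bar>a\<bar>" "x + \<bar>a\<bar> \<le> real N * h" using A N(3) by (auto simp: h_def)
    then have x: "0 \<le> (x + \<bar>a\<bar>) / h" "(x + \<bar>a\<bar>) / h \<le> real N"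
      using \<open>0 < h\<close> by (simp_all add: pos_divide_le_eq)
    define k where "k = nat \<lfloor>(x + \<bar>a\<bar>) / h\<rfloor>"
    have "k \<le> N" using x by (simp add: k_def nat_le_iff floor_le_iff)
    moreover have "real k \<le> (x + \<bar>a\<bar>) / h" "(x + \<bar>a\<bar>) / h < real k + 1"
      using x(1) unfolding k_def by linarith+
    then have "real k * h \<le> x + \<bar>a\<bar>" "x + \<bar>a\<bar> < (real k + 1) * h"
      using \<open>0 < h\<close> by (simp_all add: pos_le_divide_eq pos_divide_less_eq)
    then have "x \<in> {-\<bar>a\<bar> + real k * h .. -\<bar>a\<bar> + real k * h + h}" by (simp add: algebra_simps)
    ultimately show "x \<in> (\<Union>c\<in>F. {c .. c + h})" unfolding F_def by blast
  qed
  have "card F \<le> Suc N" using card_image_le[of "{..N}"] by (simp add: F_def)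
  then have "real (card F) \<le> 2 * real N" using N(3) by linarith
  moreover have "2 * L powr s * real N powr (1 - s) = 2 * real N * h powr s"
    using N(3) \<open>0 < L\<close> by (simp add: h_def powr_diff powr_divide field_simps)
  ultimately have "real (card F) * h powr s < e"
    using N(1) by (smt (verit) mult_right_mono powr_ge_zero)
  moreover have "finite F" by (simp add: F_def)
  ultimately show "\<exists>F L. finite F \<and> 0 \<le> L \<and> L \<le> \<delta> \<and> A \<subseteq> (\<Union>a\<in>F. {a .. a + L})
      \<and> real (card F) * L powr s < e"
    using cover N(2) \<open>0 < h\<close> by (intro exI[of _ F] exI[of _ h]) (simp add: h_def)
qed

lemma preimage_subsingleton_if_diameter_zero:
  fixes f :: "real \<Rightarrow> 'a::metric_space"
  assumes "inj_on f S" "bounded U" "diameter U \<le> 0"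
  shows "\<exists>c. {x \<in> S. f x \<in> U} \<subseteq> {c .. c}"
proof (cases "{x \<in> S. f x \<in> U} = {}")
  case False
  then obtain x0 where x0: "x0 \<in> S" "f x0 \<in> U" by blast
  have "x = x0" if "x \<in> S" "f x \<in> U" for x
  proof -
    have "dist (f x) (f x0) \<le> 0"
      using diameter_bounded_bound[OF assms(2) that(2) x0(2)] assms(3) by linarith
    then show "x = x0" using inj_onD[OF assms(1) _ that(1) x0(1)] by simp
  qed
  then show ?thesis by (intro exI[of _ x0]) auto
qed auto

text \<open>A mass distribution argument: Lebesgue measure on [a, b] is transported by f.\<close>
lemma hausdorff_measure_pos_if_short_preimages:
  fixes f :: "real \<Rightarrow> 'a::metric_space"
  assumes "a < b" and inj: "inj_on f {a..b}" and "f ` {a..b} \<subseteq> A" and "0 < \<delta>" "0 < K"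
    and short: "\<And>U. bounded U \<Longrightarrow> 0 < diameter U \<Longrightarrow> diameter U \<le> \<delta> \<Longrightarrow>
      \<exists>c l. {x \<in> {a..b}. f x \<in> U} \<subseteq> {c .. c + l} \<and> 0 \<le> l \<and> l \<le> K * diameter U powr s"
  shows "hausdorff_measure s A \<noteq> 0"
proof -
  have lower: "ennreal ((b - a) / K) \<le> hausdorff_content s \<delta> A"
    unfolding hausdorff_content_def
  proof (rule INF_greatest, clarify)
    fix U :: "nat \<Rightarrow> 'a set"
    assume cover: "A \<subseteq> (\<Union>i. U i)" and U: "\<forall>i. bounded (U i) \<and> diameter (U i) \<le> \<delta>"
    have "\<exists>c l. {x \<in> {a..b}. f x \<in> U i} \<subseteq> {c .. c + l} \<and> 0 \<le> l
        \<and> l \<le> K * diameter (U i) powr s" for i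
    proof (cases "diameter (U i) \<le> 0")
      case True
      then obtain c where "{x \<in> {a..b}. f x \<in> U i} \<subseteq> {c .. c}"
        using preimage_subsingleton_if_diameter_zero[OF inj, of "U i"] U by blast
      then show ?thesis using \<open>0 < K\<close> by (intro exI[of _ c] exI[of _ 0]) auto
    next
      case False
      then show ?thesis using short[of "U i"] U by auto
    qed
    then obtain c l where cl: "\<And>i. {x \<in> {a..b}. f x \<in> U i} \<subseteq> {c i .. c i + l i}"
      "\<And>i. 0 \<le> l i" "\<And>i. l i \<le> K * diameter (U i) powr s"
      by metis
    have "{a..b} \<subseteq> (\<Union>i. {c i .. c i + l i})" using cover cl(1) \<open>f ` {a..b} \<subseteq> A\<close> by blast
    then have "emeasure lborel {a..b} \<le> emeasure lborel (\<Union>i. {c i .. c i + l i})"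
      by (rule emeasure_mono) auto
    also have "\<dots> \<le> (\<Sum>i. emeasure lborel {c i .. c i + l i})"
      by (rule emeasure_subadditive_countably) auto
    also have "\<dots> = (\<Sum>i. ennreal (l i))" using cl(2) by simp
    also have "\<dots> \<le> (\<Sum>i. ennreal K * ennreal (diameter (U i) powr s))"
      using cl(3) \<open>0 < K\<close> by (intro suminf_le) (auto simp: ennreal_mult[symmetric] ennreal_leI)
    also have "\<dots> = ennreal K * (\<Sum>i. ennreal (diameter (U i) powr s))" by simp
    finally have "ennreal (1 / K) * ennreal (b - a)
        \<le> ennreal (1 / K) * (ennreal K * (\<Sum>i. ennreal (diameter (U i) powr s)))"
      using \<open>a < b\<close> by (intro mult_left_mono) auto
    then show "ennreal ((b - a) / K) \<le> (\<Sum>i. ennreal (diameter (U i) powr s))"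
      using \<open>0 < K\<close> \<open>a < b\<close> by (simp add: mult.assoc[symmetric] ennreal_mult[symmetric])
  qed
  have "hausdorff_content s \<delta> A \<le> hausdorff_measure s A"
    unfolding hausdorff_measure_def using \<open>0 < \<delta>\<close> by (intro SUP_upper) auto
  with lower have "ennreal ((b - a) / K) \<le> hausdorff_measure s A" by (rule order_trans)
  moreover have "0 < ennreal ((b - a) / K)" using \<open>a < b\<close> \<open>0 < K\<close> by simp
  ultimately show ?thesis by (metis less_le_trans order_less_irrefl)
qed

lemma hausdorff_dim_eqI:
  fixes A :: "'a::metric_space set"
  assumes "0 \<le> d"
    and below: "\<And>s. 0 \<le> s \<Longrightarrow> s < d \<Longrightarrow> hausdorff_measure s A \<noteq> 0"
    and above: "\<And>s. d < s \<Longrightarrow> hausdorff_measure s A = 0"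
  shows "hausdorff_dim A = ereal d"
  unfolding hausdorff_dim_def
proof (rule antisym)
  show "Inf {ereal s | s. 0 \<le> s \<and> hausdorff_measure s A = 0} \<le> ereal d"
  proof (rule ereal_le_epsilon2)
    fix e :: real assume "0 < e"
    then have "ereal (d + e) \<in> {ereal s | s. 0 \<le> s \<and> hausdorff_measure s A = 0}"
      using above[of "d + e"] \<open>0 \<le> d\<close> by auto
    then show "Inf {ereal s | s. 0 \<le> s \<and> hausdorff_measure s A = 0} \<le> ereal d + ereal e"
      by (simp add: Inf_lower)
  qed
  show "ereal d \<le> Inf {ereal s | s. 0 \<le> s \<and> hausdorff_measure s A = 0}"
    using below by (force intro: Inf_greatest)
qed

section \<open>Greedy expansions\<close>

definition digit_bound :: "real \<Rightarrow> nat" where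
  "digit_bound r = nat \<lceil>r\<rceil> - 1"

text \<open>Digits indexed from 0: \<open>greedy_digits r x i\<close> is b_{i+1}(x,r).\<close>
definition greedy_digits :: "real \<Rightarrow> real \<Rightarrow> nat \<Rightarrow> nat" where
  "greedy_digits r x i = greedy_digit r x (Suc i)"

lemma greedy_psum_Suc_digits:
  "greedy_psum r x (Suc n) = greedy_psum r x n + real (greedy_digits r x n) / r ^ Suc n"
  by (simp add: greedy_digits_def greedy_digit_def)

lemma greedy_psum_eq_sum: "greedy_psum r x n = (\<Sum>i<n. real (greedy_digits r x i) / r ^ Suc i)"
  by (induction n) (simp_all add: greedy_digits_def greedy_digit_def)

lemma greedy_digit_step:
  assumes "greedy_psum r x n \<le> x"
  shows "greedy_digits r x n \<le> digit_bound r" and "greedy_psum r x (Suc n) \<le> x"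
    and "greedy_digits r x n < digit_bound r \<Longrightarrow> x < greedy_psum r x (Suc n) + 1 / r ^ Suc n"
proof -
  define P where "P = (\<lambda>d. d \<le> nat \<lceil>r\<rceil> - 1 \<and> greedy_psum r x n + real d / r ^ Suc n \<le> x)"
  have bounded: "\<And>d. P d \<Longrightarrow> d \<le> nat \<lceil>r\<rceil> - 1" by (simp add: P_def)
  have digit: "greedy_digits r x n = Greatest P" by (simp add: greedy_digits_def greedy_digit_def P_def)
  have "P (Greatest P)" by (rule GreatestI_nat[of P 0, OF _ bounded]) (use assms in \<open>simp add: P_def\<close>)
  then show "greedy_digits r x n \<le> digit_bound r" and "greedy_psum r x (Suc n) \<le> x"
    by (simp_all add: digit P_def digit_bound_def greedy_psum_Suc_digits del: greedy_psum.simps)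
  assume less: "greedy_digits r x n < digit_bound r"
  have "\<not> P (Suc (Greatest P))"
    using Greatest_le_nat[of P "Suc (Greatest P)", OF _ bounded] by auto
  then have "x < greedy_psum r x n + real (Suc (greedy_digits r x n)) / r ^ Suc n"
    using less by (auto simp: P_def digit digit_bound_def)
  then show "x < greedy_psum r x (Suc n) + 1 / r ^ Suc n"
    by (simp add: greedy_psum_Suc_digits add_divide_distrib del: greedy_psum.simps)
qed

lemma greedy_psum_le:
  assumes "0 \<le> x" shows "greedy_psum r x n \<le> x"
proof (induction n)
  case (Suc n)
  then show ?case by (rule greedy_digit_step(2))
qed (simp add: assms)

lemma greedy_digits_le: "0 \<le> x \<Longrightarrow> greedy_digits r x n \<le> digit_bound r"
  by (rule greedy_digit_step(1)[OF greedy_psum_le])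

lemma greedy_less_if_digit_less:
  "0 \<le> x \<Longrightarrow> greedy_digits r x n < digit_bound r \<Longrightarrow> x < greedy_psum r x (Suc n) + 1 / r ^ Suc n"
  by (rule greedy_digit_step(3)[OF greedy_psum_le])

lemma real_digit_bound: "1 < r \<Longrightarrow> real (digit_bound r) = of_int \<lceil>r\<rceil> - 1"
proof -
  assume "1 < r"
  then have "\<lceil>r\<rceil> \<ge> 2" by linarith
  then have "1 \<le> nat \<lceil>r\<rceil>" by linarith
  then have "real (nat \<lceil>r\<rceil> - 1) = real (nat \<lceil>r\<rceil>) - 1" by (simp add: of_nat_diff)
  with \<open>\<lceil>r\<rceil> \<ge> 2\<close> show ?thesis unfolding digit_bound_def by simp
qed

lemma digit_bound_ge: "1 < r \<Longrightarrow> r - 1 \<le> real (digit_bound r)"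
  using real_digit_bound[of r] by linarith

lemma digit_bound_mono: "r \<le> q \<Longrightarrow> digit_bound r \<le> digit_bound q"
  unfolding digit_bound_def by (intro diff_le_mono nat_mono ceiling_mono)

lemma greedy_interval_eq: "1 < r \<Longrightarrow> greedy_interval r = {0 .. real (digit_bound r) / (r - 1)}"
  by (simp add: greedy_interval_def real_digit_bound)

lemma greedy_remainder_le:
  assumes r: "1 < r" and x: "x \<in> greedy_interval r"
  shows "x - greedy_psum r x n \<le> (real (digit_bound r) / (r - 1)) / r ^ n"
proof (induction n)
  case 0
  then show ?case using x r by (simp add: greedy_interval_eq)
next
  case (Suc n)
  define M where "M = real (digit_bound r) / (r - 1)"
  have x0: "0 \<le> x" using x r by (simp add: greedy_interval_eq)
  have M1: "1 \<le> M" using digit_bound_ge[OF r] r by (simp add: M_def field_simps)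
  show ?case
  proof (cases "greedy_digits r x n < digit_bound r")
    case True
    have "x - greedy_psum r x (Suc n) < 1 / r ^ Suc n"
      using greedy_less_if_digit_less[OF x0 True] by simp
    also have "\<dots> \<le> M / r ^ Suc n" using M1 r by (simp add: divide_right_mono)
    finally show ?thesis by (simp add: M_def)
  next
    case False
    then have "greedy_digits r x n = digit_bound r" using greedy_digits_le[OF x0, of r n] by simp
    then have "x - greedy_psum r x (Suc n) = (x - greedy_psum r x n) - real (digit_bound r) / r ^ Suc n"
      by (simp add: greedy_psum_Suc_digits del: greedy_psum.simps)
    also have "\<dots> \<le> M / r ^ n - real (digit_bound r) / r ^ Suc n" using Suc by (simp add: M_def)
    also have "\<dots> = M / r ^ Suc n" using r by (simp add: M_def field_simps)
    finally show ?thesis by (simp add: M_def)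
  qed
qed

lemma greedy_psum_tendsto:
  assumes r: "1 < r" and x: "x \<in> greedy_interval r"
  shows "greedy_psum r x \<longlonglongrightarrow> x"
proof (rule tendsto_sandwich)
  define M where "M = real (digit_bound r) / (r - 1)"
  have "x - M * (1 / r) ^ n \<le> greedy_psum r x n" for n
    using greedy_remainder_le[OF r x, of n] by (simp add: M_def power_divide)
  then show "\<forall>\<^sub>F n in sequentially. x - M * (1 / r) ^ n \<le> greedy_psum r x n" by simp
  have "0 \<le> x" using x r by (simp add: greedy_interval_eq)
  then show "\<forall>\<^sub>F n in sequentially. greedy_psum r x n \<le> x" by (simp add: greedy_psum_le)
  show "(\<lambda>n. x - M * (1 / r) ^ n) \<longlonglongrightarrow> x"
    using tendsto_diff[OF tendsto_const tendsto_mult_right_zero[OF LIMSEQ_power_zero[of "1 / r"]]] r by simp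
qed simp

lemma greedy_digits_inj:
  assumes "1 < r" "x \<in> greedy_interval r" "y \<in> greedy_interval r"
    and "\<And>i. greedy_digits r x i = greedy_digits r y i"
  shows "x = y"
proof -
  have "greedy_psum r x = greedy_psum r y" by (rule ext) (simp add: greedy_psum_eq_sum assms(4))
  then show ?thesis
    using greedy_psum_tendsto[OF assms(1,2)] greedy_psum_tendsto[OF assms(1,3)] by (metis LIMSEQ_unique)
qed

section \<open>Greedy digits read in another base\<close>

definition prefix_value :: "real \<Rightarrow> real \<Rightarrow> real \<Rightarrow> nat \<Rightarrow> real" where
  "prefix_value b r x m = (\<Sum>i<m. real (greedy_digits r x i) / b ^ Suc i)"

definition rebase :: "real \<Rightarrow> real \<Rightarrow> real \<Rightarrow> real" where
  "rebase q r x = (\<Sum>i. real (greedy_digits r x i) / q ^ Suc i)"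

lemma G_set_eq_image_rebase: "G_set r q = rebase q r ` greedy_interval r"
  unfolding G_set_def rebase_def greedy_digits_def ..

text \<open>This is what makes prefixes of distinct greedy expansions separated.\<close>
lemma greedy_tail_after_nonmax_digit:
  assumes r: "1 < r" and x: "0 \<le> x" and "k < m"
    and nonmax: "greedy_digits r x k < digit_bound r"
  shows "(\<Sum>i\<in>{k<..<m}. real (greedy_digits r x i) / r ^ (i - k)) < 1"
proof -
  have "(\<Sum>i\<in>{k<..<m}. real (greedy_digits r x i) / r ^ (i - k))
      = r ^ Suc k * (\<Sum>i\<in>{k<..<m}. real (greedy_digits r x i) / r ^ Suc i)"
    by (subst sum_shift_power) (use r in auto)
  also have "\<dots> = r ^ Suc k * (greedy_psum r x m - greedy_psum r x (Suc k))"
    unfolding greedy_psum_eq_sum sum_lessThan_split_at[OF \<open>k < m\<close>] sum.lessThan_Suc by simp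
  also have "\<dots> \<le> r ^ Suc k * (x - greedy_psum r x (Suc k))"
    using greedy_psum_le[OF x] r by (intro mult_left_mono) auto
  also have "\<dots> < r ^ Suc k * (1 / r ^ Suc k)"
    using greedy_less_if_digit_less[OF x nonmax] r by (intro mult_strict_left_mono) auto
  also have "\<dots> = 1" using r by simp
  finally show ?thesis .
qed

lemma prefix_sum_gap:
  fixes u v :: "nat \<Rightarrow> nat" and b \<rho> :: real
  assumes b: "1 < b" and "k < m" and eq: "\<And>i. i < k \<Longrightarrow> u i = v i" and less: "u k < v k"
    and tail: "(\<Sum>i\<in>{k<..<m}. real (u i) / b ^ (i - k)) \<le> \<rho>"
  shows "(1 - \<rho>) / b ^ Suc k \<le> (\<Sum>i<m. real (v i) / b ^ Suc i) - (\<Sum>i<m. real (u i) / b ^ Suc i)"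
proof -
  have head: "(\<Sum>i<k. real (u i) / b ^ Suc i) = (\<Sum>i<k. real (v i) / b ^ Suc i)"
    using eq by simp
  have tail_u: "(\<Sum>i\<in>{k<..<m}. real (u i) / b ^ Suc i) \<le> \<rho> / b ^ Suc k"
    using tail b by (subst sum_shift_power) (auto intro: divide_right_mono)
  have tail_v: "0 \<le> (\<Sum>i\<in>{k<..<m}. real (v i) / b ^ Suc i)"
    using b by (intro sum_nonneg) auto
  have "real (u k) / b ^ Suc k + 1 / b ^ Suc k \<le> real (v k) / b ^ Suc k"
    using less b by (simp add: add_divide_distrib[symmetric] divide_right_mono)
  then show ?thesis
    unfolding sum_lessThan_split_at[OF \<open>k < m\<close>, of "\<lambda>i. real (v i) / b ^ Suc i"]
      sum_lessThan_split_at[OF \<open>k < m\<close>, of "\<lambda>i. real (u i) / b ^ Suc i"] head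
    using tail_u tail_v by (simp add: diff_divide_distrib)
qed

lemma greedy_prefix_gap:
  assumes r1: "1 < r1" and r2: "1 < r2" and same: "digit_bound r1 = digit_bound r2"
    and x: "0 \<le> x" and y: "0 \<le> y" and "r1 \<le> t" "t \<le> b" and "k < m"
    and eq: "\<And>i. i < k \<Longrightarrow> greedy_digits r1 x i = greedy_digits r2 y i"
    and less: "greedy_digits r1 x k < greedy_digits r2 y k"
  shows "(1 - t / b) / b ^ Suc k \<le> prefix_value b r2 y m - prefix_value b r1 x m"
proof -
  have b: "1 < b" using assms by linarith
  have nonmax: "greedy_digits r1 x k < digit_bound r1"
    using less greedy_digits_le[OF y, of r2 k] same by simp
  have "(\<Sum>i\<in>{k<..<m}. real (greedy_digits r1 x i) / b ^ (i - k))
      \<le> (\<Sum>i\<in>{k<..<m}. r1 / b * (real (greedy_digits r1 x i) / r1 ^ (i - k)))"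
  proof (rule sum_mono)
    fix i assume "i \<in> {k<..<m}"
    then have "1 \<le> i - k" by auto
    have "(r1 / b) ^ (i - k) \<le> r1 / b"
      using power_decreasing[OF \<open>1 \<le> i - k\<close>, of "r1 / b"] assms by simp
    then have "real (greedy_digits r1 x i) * (r1 / b) ^ (i - k) / r1 ^ (i - k)
        \<le> real (greedy_digits r1 x i) * (r1 / b) / r1 ^ (i - k)"
      using r1 by (intro divide_right_mono mult_left_mono) auto
    then show "real (greedy_digits r1 x i) / b ^ (i - k)
        \<le> r1 / b * (real (greedy_digits r1 x i) / r1 ^ (i - k))"
      using r1 b by (simp add: power_divide ac_simps)
  qed
  also have "\<dots> = r1 / b * (\<Sum>i\<in>{k<..<m}. real (greedy_digits r1 x i) / r1 ^ (i - k))"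
    by (simp only: sum_distrib_left)
  also have "\<dots> \<le> r1 / b"
    using greedy_tail_after_nonmax_digit[OF r1 x \<open>k < m\<close> nonmax] r1 b by (intro mult_left_le) auto
  also have "\<dots> \<le> t / b" using assms b by (simp add: divide_right_mono)
  finally show ?thesis
    unfolding prefix_value_def
    using prefix_sum_gap[where u="greedy_digits r1 x" and v="greedy_digits r2 y", OF b \<open>k < m\<close> eq less]
    by blast
qed

lemma greedy_prefix_separation:
  assumes r1: "1 < r1" and r2: "1 < r2" and same: "digit_bound r1 = digit_bound r2"
    and x: "0 \<le> x" and y: "0 \<le> y" and t: "r1 \<le> t" "r2 \<le> t" "t \<le> b" and "m \<le> n"
    and differ: "\<exists>i<m. greedy_digits r1 x i \<noteq> greedy_digits r2 y i"
  shows "(1 - t / b) / b ^ m \<le> \<bar>prefix_value b r2 y n - prefix_value b r1 x n\<bar>"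
proof -
  define k where "k = (LEAST i. greedy_digits r1 x i \<noteq> greedy_digits r2 y i)"
  have b: "1 < b" using assms by linarith
  have k: "greedy_digits r1 x k \<noteq> greedy_digits r2 y k" "k < m"
    using differ LeastI[of "\<lambda>i. greedy_digits r1 x i \<noteq> greedy_digits r2 y i"]
      Least_le[of "\<lambda>i. greedy_digits r1 x i \<noteq> greedy_digits r2 y i"]
    unfolding k_def by (blast, fastforce)
  have eq: "\<And>i. i < k \<Longrightarrow> greedy_digits r1 x i = greedy_digits r2 y i"
    unfolding k_def using not_less_Least by blast
  have "k < n" using k(2) \<open>m \<le> n\<close> by simp
  have "(1 - t / b) / b ^ m \<le> (1 - t / b) / b ^ Suc k"
    using k(2) b t by (intro divide_left_mono power_increasing) auto
  also have "\<dots> \<le> \<bar>prefix_value b r2 y n - prefix_value b r1 x n\<bar>"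
  proof (cases "greedy_digits r1 x k < greedy_digits r2 y k")
    case True
    show ?thesis using greedy_prefix_gap[OF r1 r2 same x y t(1,3) \<open>k < n\<close> eq True] by linarith
  next
    case False
    then have "greedy_digits r2 y k < greedy_digits r1 x k" using k(1) by simp
    then show ?thesis
      using greedy_prefix_gap[OF r2 r1 same[symmetric] y x t(2,3) \<open>k < n\<close>] eq by fastforce
  qed
  finally show ?thesis .
qed

lemma rebase_bounds:
  assumes b: "1 < b" and x: "0 \<le> x"
  shows "prefix_value b r x m \<le> rebase b r x"
    and "rebase b r x \<le> prefix_value b r x m + real (digit_bound r) / ((b - 1) * b ^ m)"
proof -
  define f where "f i = real (greedy_digits r x i) / b ^ Suc i" for i
  define g where "g i = real (digit_bound r) / b * (1 / b) ^ i" for i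
  have q1: "norm (1 / b) < 1" using b by simp
  have sg: "summable g" unfolding g_def by (intro summable_mult summable_geometric q1)
  have fg: "0 \<le> f i \<and> f i \<le> g i" for i
    unfolding f_def g_def using greedy_digits_le[OF x, of r i] b
    by (auto simp: divide_right_mono power_divide field_simps)
  have sf: "summable f" by (rule summable_comparison_test'[OF sg, of 0]) (use fg in auto)
  have split: "rebase b r x = (\<Sum>n. f (n + m)) + prefix_value b r x m"
    unfolding rebase_def prefix_value_def f_def[symmetric] by (rule suminf_split_initial_segment[OF sf])
  have "0 \<le> (\<Sum>n. f (n + m))"
    by (intro suminf_nonneg summable_ignore_initial_segment[OF sf]) (use fg in auto)
  then show "prefix_value b r x m \<le> rebase b r x" using split by simp
  have "(\<Sum>n. f (n + m)) \<le> (\<Sum>n. g (n + m))"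
    by (intro suminf_le summable_ignore_initial_segment sf sg) (use fg in auto)
  also have "(\<Sum>n. g (n + m)) = (\<Sum>n. (real (digit_bound r) / b * (1 / b) ^ m) * (1 / b) ^ n)"
    unfolding g_def by (simp add: power_add mult_ac)
  also have "\<dots> = real (digit_bound r) / ((b - 1) * b ^ m)"
    unfolding suminf_mult[OF summable_geometric[OF q1]] suminf_geometric[OF q1]
    using b by (simp add: field_simps power_divide)
  finally show "rebase b r x \<le> prefix_value b r x m + real (digit_bound r) / ((b - 1) * b ^ m)"
    using split by simp
qed

lemma rebase_nonneg: "1 < b \<Longrightarrow> 0 \<le> x \<Longrightarrow> 0 \<le> rebase b r x"
  using rebase_bounds(1)[of b x r 0] by (simp add: prefix_value_def)

lemma rebase_le: "1 < b \<Longrightarrow> 0 \<le> x \<Longrightarrow> rebase b r x \<le> real (digit_bound r) / (b - 1)"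
  using rebase_bounds(2)[of b x r 0] by (simp add: prefix_value_def)

lemma prefix_value_tendsto_rebase:
  assumes b: "1 < b" and x: "0 \<le> x"
  shows "prefix_value b r x \<longlonglongrightarrow> rebase b r x"
proof (rule tendsto_sandwich)
  define C where "C = real (digit_bound r) / (b - 1)"
  show "\<forall>\<^sub>F m in sequentially. rebase b r x - C * (1 / b) ^ m \<le> prefix_value b r x m"
  proof (intro always_eventually allI)
    fix m
    show "rebase b r x - C * (1 / b) ^ m \<le> prefix_value b r x m"
      using rebase_bounds(2)[OF assms, of r m] by (simp add: C_def power_divide)
  qed
  show "\<forall>\<^sub>F m in sequentially. prefix_value b r x m \<le> rebase b r x"
    using rebase_bounds(1)[OF assms] by simp
  show "(\<lambda>m. rebase b r x - C * (1 / b) ^ m) \<longlonglongrightarrow> rebase b r x"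
    using tendsto_diff[OF tendsto_const tendsto_mult_right_zero[OF LIMSEQ_power_zero[of "1 / b"]]] b
    by simp
qed simp

lemma rebase_separation:
  assumes r: "1 < r" "r < q" and x: "x \<in> greedy_interval r" and y: "y \<in> greedy_interval r"
    and differ: "\<exists>i<m. greedy_digits r x i \<noteq> greedy_digits r y i"
  shows "(1 - r / q) / q ^ m \<le> \<bar>rebase q r y - rebase q r x\<bar>"
proof (rule LIMSEQ_le_const)
  have q: "1 < q" and x0: "0 \<le> x" and y0: "0 \<le> y" using r x y by (auto simp: greedy_interval_eq)
  show "(\<lambda>n. \<bar>prefix_value q r y n - prefix_value q r x n\<bar>) \<longlonglongrightarrow> \<bar>rebase q r y - rebase q r x\<bar>"
    by (intro tendsto_intros prefix_value_tendsto_rebase q x0 y0)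
  show "\<exists>N. \<forall>n\<ge>N. (1 - r / q) / q ^ m \<le> \<bar>prefix_value q r y n - prefix_value q r x n\<bar>"
    using greedy_prefix_separation[OF r(1) r(1) refl x0 y0 order_refl order_refl _ _ differ] r
    by (intro exI[of _ m]) auto
qed

lemma inj_on_rebase:
  assumes r: "1 < r" "r < q"
  shows "inj_on (rebase q r) (greedy_interval r)"
proof (rule inj_onI)
  fix x y assume x: "x \<in> greedy_interval r" and y: "y \<in> greedy_interval r"
    and eq: "rebase q r x = rebase q r y"
  have "greedy_digits r x i = greedy_digits r y i" for i
  proof (rule ccontr)
    assume "greedy_digits r x i \<noteq> greedy_digits r y i"
    then have "(1 - r / q) / q ^ Suc i \<le> \<bar>rebase q r y - rebase q r x\<bar>"
      by (intro rebase_separation[OF r x y]) auto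
    moreover have "0 < (1 - r / q) / q ^ Suc i" using r by simp
    ultimately show False using eq by simp
  qed
  then show "x = y" using greedy_digits_inj[OF r(1) x y] by blast
qed

section \<open>Counting prefixes and covering\<close>

definition greedy_word :: "real \<Rightarrow> real \<Rightarrow> nat \<Rightarrow> nat list" where
  "greedy_word r x m = map (greedy_digits r x) [0..<m]"

definition word_value :: "real \<Rightarrow> nat list \<Rightarrow> real" where
  "word_value b w = (\<Sum>i<length w. real (w ! i) / b ^ Suc i)"

definition greedy_words :: "real set \<Rightarrow> nat \<Rightarrow> nat list set" where
  "greedy_words R m = {greedy_word r x m | r x. r \<in> R \<and> x \<in> greedy_interval r}"

lemma word_value_greedy_word: "word_value b (greedy_word r x m) = prefix_value b r x m"
  unfolding word_value_def greedy_word_def prefix_value_def by simp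

text \<open>Words of length m coming from bases r \<le> t < b have b-adic values that are
  (1 - t/b)/b^m-separated in [0, c/(b-1)], so there are only O(b^m) of them.\<close>
lemma card_greedy_words:
  assumes b: "1 < b" and "t < b"
    and R: "\<And>r. r \<in> R \<Longrightarrow> 1 < r \<and> digit_bound r = c \<and> r \<le> t"
  shows "finite (greedy_words R m)"
    and "real (card (greedy_words R m)) \<le> (real c / ((b - 1) * (1 - t / b)) + 1) * b ^ m"
proof -
  have nonneg: "0 \<le> x" if "r \<in> R" "x \<in> greedy_interval r" for r x
    using that R by (simp add: greedy_interval_eq)
  have "greedy_words R m \<subseteq> {w. set w \<subseteq> {0..c} \<and> length w = m}"
  proof
    fix w assume "w \<in> greedy_words R m"
    then obtain r x where w: "w = greedy_word r x m" "r \<in> R" "x \<in> greedy_interval r"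
      unfolding greedy_words_def by blast
    then have "greedy_digits r x i \<le> c" for i using greedy_digits_le[OF nonneg] R by metis
    then show "w \<in> {w. set w \<subseteq> {0..c} \<and> length w = m}" by (auto simp: w(1) greedy_word_def)
  qed
  then show fin: "finite (greedy_words R m)"
    by (rule finite_subset) (simp add: finite_lists_length_eq)
  define \<delta> where "\<delta> = (1 - t / b) / b ^ m"
  have tb: "0 < 1 - t / b" using assms by simp
  then have "0 < \<delta>" using b by (simp add: \<delta>_def)
  have sep: "\<delta> \<le> \<bar>word_value b w - word_value b w'\<bar>"
    if hw: "w \<in> greedy_words R m" and hw': "w' \<in> greedy_words R m" and "w \<noteq> w'" for w w'
  proof -
    obtain r x r' y where w: "w = greedy_word r x m" "r \<in> R" "x \<in> greedy_interval r"
      and w': "w' = greedy_word r' y m" "r' \<in> R" "y \<in> greedy_interval r'"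
      using hw hw' unfolding greedy_words_def by blast
    have r: "1 < r" "digit_bound r = c" "r \<le> t" and r': "1 < r'" "digit_bound r' = c" "r' \<le> t"
      using R[OF w(2)] R[OF w'(2)] by auto
    have "\<exists>i<m. greedy_digits r' y i \<noteq> greedy_digits r x i"
      using \<open>w \<noteq> w'\<close> unfolding w w' greedy_word_def by (auto intro!: nth_equalityI)
    from greedy_prefix_separation[OF r'(1) r(1) _ nonneg[OF w'(2,3)] nonneg[OF w(2,3)]
        r'(3) r(3) _ order_refl this]
    show ?thesis using r r' \<open>t < b\<close> by (simp add: \<delta>_def w(1) w'(1) word_value_greedy_word)
  qed
  have inj: "inj_on (word_value b) (greedy_words R m)"
  proof (rule inj_onI, rule ccontr)
    fix w w' assume "w \<in> greedy_words R m" "w' \<in> greedy_words R m"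
      "word_value b w = word_value b w'" "w \<noteq> w'"
    then show False using sep \<open>0 < \<delta>\<close> by fastforce
  qed
  have "word_value b ` greedy_words R m \<subseteq> {0..real c / (b - 1)}"
  proof
    fix z assume "z \<in> word_value b ` greedy_words R m"
    then obtain r x where z: "z = prefix_value b r x m" "r \<in> R" "x \<in> greedy_interval r"
      unfolding greedy_words_def by (auto simp: word_value_greedy_word)
    have "z \<le> real c / (b - 1)"
      using rebase_bounds(1)[OF b nonneg[OF z(2,3)], of r m] rebase_le[OF b nonneg[OF z(2,3)], of r]
        R[OF z(2)] z(1) by simp
    moreover have "0 \<le> z" using b unfolding z(1) prefix_value_def by (intro sum_nonneg) simp
    ultimately show "z \<in> {0..real c / (b - 1)}" by simp
  qed
  then have "real (card (word_value b ` greedy_words R m)) \<le> (real c / (b - 1)) / \<delta> + 1"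
    using fin \<open>0 < \<delta>\<close> b by (intro card_separated_le) (auto intro: sep)
  also have "\<dots> = real c / ((b - 1) * (1 - t / b)) * b ^ m + 1"
    using b tb by (simp add: \<delta>_def field_simps)
  also have "\<dots> \<le> (real c / ((b - 1) * (1 - t / b)) + 1) * b ^ m"
    using b by (simp add: distrib_right)
  finally show "real (card (greedy_words R m)) \<le> (real c / ((b - 1) * (1 - t / b)) + 1) * b ^ m"
    by (simp add: card_image[OF inj])
qed

lemma greedy_union_interval_covers:
  assumes q: "1 < q" and b: "1 < b" and "t < b"
    and R: "\<And>r. r \<in> R \<Longrightarrow> 1 < r \<and> digit_bound r = c \<and> r \<le> t"
  obtains C h where "\<And>m. \<exists>F. finite F \<and> real (card F) \<le> C * b ^ m
      \<and> (\<Union>r\<in>R. G_set r q) \<subseteq> (\<Union>a\<in>F. {a .. a + h / q ^ m})" and "0 \<le> h"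
proof -
  define C where "C = real c / ((b - 1) * (1 - t / b)) + 1"
  define h where "h = real c / (q - 1)"
  have covers: "\<exists>F. finite F \<and> real (card F) \<le> C * b ^ m
      \<and> (\<Union>r\<in>R. G_set r q) \<subseteq> (\<Union>a\<in>F. {a .. a + h / q ^ m})" for m
  proof -
    let ?W = "greedy_words R m"
    let ?F = "word_value q ` ?W"
    have "real (card ?F) \<le> real (card ?W)"
      by (simp add: card_image_le card_greedy_words(1)[OF b \<open>t < b\<close> R])
    also have "\<dots> \<le> C * b ^ m" unfolding C_def by (rule card_greedy_words(2)[OF b \<open>t < b\<close> R])
    finally have card: "real (card ?F) \<le> C * b ^ m" .
    have cover: "(\<Union>r\<in>R. G_set r q) \<subseteq> (\<Union>a\<in>?F. {a .. a + h / q ^ m})"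
    proof
      fix z assume "z \<in> (\<Union>r\<in>R. G_set r q)"
      then obtain r x where rx: "r \<in> R" "x \<in> greedy_interval r" "z = rebase q r x"
        unfolding G_set_eq_image_rebase by blast
      then have x: "0 \<le> x" using R by (simp add: greedy_interval_eq)
      have "greedy_word r x m \<in> ?W" unfolding greedy_words_def using rx(1,2) by blast
      moreover have "z \<in> {word_value q (greedy_word r x m) ..
          word_value q (greedy_word r x m) + h / q ^ m}"
        using rebase_bounds[OF q x, of r m] rx(3) R[OF rx(1)] by (simp add: h_def word_value_greedy_word)
      ultimately show "z \<in> (\<Union>a\<in>?F. {a .. a + h / q ^ m})" by blast
    qed
    show ?thesis using card_greedy_words(1)[OF b \<open>t < b\<close> R] card cover by blast
  qed
  moreover have "0 \<le> h" using q by (simp add: h_def)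
  ultimately show thesis by (rule that)
qed

lemma small_interval_covers_greedy_union:
  assumes q: "1 < q" and b: "1 < b" "t < b" "b < q powr s"
    and R: "\<And>r. r \<in> R \<Longrightarrow> 1 < r \<and> digit_bound r = c \<and> r \<le> t"
  shows "small_interval_covers s (\<Union>r\<in>R. G_set r q)"
  unfolding small_interval_covers_def
proof (intro allI impI)
  fix e \<delta> :: real assume "0 < e" "0 < \<delta>"
  obtain C h where covers: "\<And>m. \<exists>F. finite F \<and> real (card F) \<le> C * b ^ m
      \<and> (\<Union>r\<in>R. G_set r q) \<subseteq> (\<Union>a\<in>F. {a .. a + h / q ^ m})" and "0 \<le> h"
    using greedy_union_interval_covers[OF q b(1,2) R] by metis
  have "0 < q powr s" using q by simp
  have "(\<lambda>m. C * h powr s * (b / q powr s) ^ m) \<longlonglongrightarrow> 0"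
    using b \<open>0 < q powr s\<close> by (intro tendsto_mult_right_zero LIMSEQ_power_zero) auto
  moreover have "(\<lambda>m. h * (1 / q) ^ m) \<longlonglongrightarrow> 0"
    using q by (intro tendsto_mult_right_zero LIMSEQ_power_zero) auto
  ultimately have "\<forall>\<^sub>F m in sequentially. C * h powr s * (b / q powr s) ^ m < e \<and> h * (1 / q) ^ m < \<delta>"
    using \<open>0 < e\<close> \<open>0 < \<delta>\<close> by (intro eventually_conj order_tendstoD(2))
  then obtain m where m: "C * h powr s * (b / q powr s) ^ m < e" "h * (1 / q) ^ m < \<delta>"
    unfolding eventually_sequentially by blast
  obtain F where F: "finite F" "real (card F) \<le> C * b ^ m"
    "(\<Union>r\<in>R. G_set r q) \<subseteq> (\<Union>a\<in>F. {a .. a + h / q ^ m})"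
    using covers[of m] by (elim exE conjE)
  have "C * b ^ m * (h / q ^ m) powr s = C * b ^ m * (h powr s / (q ^ m) powr s)"
    using \<open>0 \<le> h\<close> by (simp add: powr_divide)
  also have "(q ^ m) powr s = (q powr s) ^ m"
    using q by (intro power_powr) simp
  finally have "C * b ^ m * (h / q ^ m) powr s = C * h powr s * (b / q powr s) ^ m"
    by (simp add: power_divide)
  have "real (card F) * (h / q ^ m) powr s \<le> C * b ^ m * (h / q ^ m) powr s"
    using F(2) by (rule mult_right_mono) simp
  also have "\<dots> = C * h powr s * (b / q powr s) ^ m" by fact
  finally have "real (card F) * (h / q ^ m) powr s < e" using m(1) by linarith
  moreover have "0 \<le> h / q ^ m" "h / q ^ m \<le> \<delta>" using \<open>0 \<le> h\<close> m(2) q by (simp_all add: power_divide)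
  ultimately show "\<exists>F L. finite F \<and> 0 \<le> L \<and> L \<le> \<delta> \<and> (\<Union>r\<in>R. G_set r q) \<subseteq> (\<Union>a\<in>F. {a .. a + L})
      \<and> real (card F) * L powr s < e"
    using F(1,3) by (intro exI[of _ F] exI[of _ "h / q ^ m"]) simp
qed

section \<open>Dimension, category and measure of the sets G\<close>

lemma rebase_preimage_in_interval:
  assumes r: "1 < r" "r < q" and U: "bounded U" "diameter U < (1 - r / q) / q ^ m"
  shows "\<exists>a. {x \<in> greedy_interval r. rebase q r x \<in> U}
           \<subseteq> {a .. a + (real (digit_bound r) / (r - 1)) / r ^ m}"
proof (cases "{x \<in> greedy_interval r. rebase q r x \<in> U} = {}")
  case False
  then obtain x0 where x0: "x0 \<in> greedy_interval r" "rebase q r x0 \<in> U" by blast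
  have "x \<in> {greedy_psum r x0 m .. greedy_psum r x0 m + (real (digit_bound r) / (r - 1)) / r ^ m}"
    if x: "x \<in> greedy_interval r" "rebase q r x \<in> U" for x
  proof -
    have "greedy_digits r x i = greedy_digits r x0 i" if "i < m" for i
    proof (rule ccontr)
      assume "greedy_digits r x i \<noteq> greedy_digits r x0 i"
      then have "(1 - r / q) / q ^ m \<le> \<bar>rebase q r x0 - rebase q r x\<bar>"
        using \<open>i < m\<close> by (intro rebase_separation[OF r x(1) x0(1)]) auto
      moreover have "\<bar>rebase q r x0 - rebase q r x\<bar> \<le> diameter U"
        using diameter_bounded_bound[OF U(1) x0(2) x(2)] by (simp add: dist_real_def)
      ultimately show False using U(2) by simp
    qed
    then have "greedy_psum r x m = greedy_psum r x0 m" by (simp add: greedy_psum_eq_sum)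
    moreover have "0 \<le> x" using x r by (simp add: greedy_interval_eq)
    ultimately show ?thesis using greedy_remainder_le[OF r(1) x(1), of m] greedy_psum_le[of x r m] by simp
  qed
  then show ?thesis by blast
qed auto

lemma rebase_preimage_short:
  assumes r: "1 < r" "r < q" and U: "bounded U" "0 < diameter U" "diameter U \<le> (1 - r / q) / q"
  shows "\<exists>a l. {x \<in> greedy_interval r. rebase q r x \<in> U} \<subseteq> {a .. a + l} \<and> 0 \<le> l
           \<and> l \<le> real (digit_bound r) / (r - 1) * (q / (1 - r / q)) powr (ln r / ln q)
                * diameter U powr (ln r / ln q)"
proof -
  define \<rho> where "\<rho> = 1 - r / q"
  define s where "s = ln r / ln q"
  define M where "M = real (digit_bound r) / (r - 1)"
  have q: "1 < q" and "0 < \<rho>" using r by (auto simp: \<rho>_def)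
  have "\<rho> / q < \<rho>" using \<open>0 < \<rho>\<close> q by (simp add: divide_less_eq)
  then have "diameter U < \<rho>" using U(3) unfolding \<rho>_def by linarith
  then obtain m where m: "\<rho> / q ^ Suc m \<le> diameter U" "diameter U < \<rho> / q ^ m"
    using ex_power_bracket[OF q U(2)] by blast
  obtain a where a: "{x \<in> greedy_interval r. rebase q r x \<in> U} \<subseteq> {a .. a + M / r ^ m}"
    using rebase_preimage_in_interval[OF r U(1)] m(2) unfolding M_def \<rho>_def by blast
  have "q powr s = r" using r q by (simp add: s_def powr_def)
  then have "(1 / q ^ m) powr s = 1 / r ^ m"
    using q by (simp add: powr_divide power_powr)
  moreover have "1 / q ^ m \<le> q / \<rho> * diameter U" using m(1) \<open>0 < \<rho>\<close> q by (simp add: field_simps)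
  then have "(1 / q ^ m) powr s \<le> (q / \<rho> * diameter U) powr s"
    using r q by (intro powr_mono2) (auto simp: s_def)
  moreover have "(q / \<rho> * diameter U) powr s = (q / \<rho>) powr s * diameter U powr s"
    by (rule powr_mult)
  ultimately have "1 / r ^ m \<le> (q / \<rho>) powr s * diameter U powr s" by simp
  moreover have "0 \<le> M" using r by (simp add: M_def)
  ultimately have "M * (1 / r ^ m) \<le> M * ((q / \<rho>) powr s * diameter U powr s)"
    by (intro mult_left_mono)
  then have "M / r ^ m \<le> M * ((q / \<rho>) powr s * diameter U powr s)" by simp
  moreover have "0 \<le> M / r ^ m" using r by (simp add: M_def)
  ultimately show ?thesis using a unfolding M_def \<rho>_def s_def by (auto simp: mult_ac)
qed

lemma hausdorff_measure_pos_if_G_set_subset: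
  assumes r: "1 < r" "r < q" and "G_set r q \<subseteq> A" and "0 \<le> s" "s \<le> ln r / ln q"
  shows "hausdorff_measure s A \<noteq> 0"
proof -
  define M where "M = real (digit_bound r) / (r - 1)"
  define K where "K = M * (q / (1 - r / q)) powr (ln r / ln q)"
  have q: "1 < q" using r by simp
  have "0 < M" using digit_bound_ge[OF r(1)] r(1) by (simp add: M_def)
  then have "0 < K" using r by (simp add: K_def)
  have J: "greedy_interval r = {0..M}" using r by (simp add: greedy_interval_eq M_def)
  show ?thesis
  proof (rule hausdorff_measure_pos_if_short_preimages[where f="rebase q r" and \<delta>="(1 - r / q) / q"])
    show "0 < M" "0 < K" "0 < (1 - r / q) / q" by fact+ (use r in simp)
    show "inj_on (rebase q r) {0..M}" using inj_on_rebase[OF r] J by simp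
    show "rebase q r ` {0..M} \<subseteq> A" using \<open>G_set r q \<subseteq> A\<close> J by (simp add: G_set_eq_image_rebase)
  next
    fix U :: "real set" assume U: "bounded U" "0 < diameter U" "diameter U \<le> (1 - r / q) / q"
    then obtain a l where al: "{x \<in> greedy_interval r. rebase q r x \<in> U} \<subseteq> {a .. a + l}" "0 \<le> l"
      "l \<le> K * diameter U powr (ln r / ln q)"
      using rebase_preimage_short[OF r U] unfolding K_def M_def by blast
    have "(1 - r / q) / q \<le> 1 / q" using r by (intro divide_right_mono) auto
    also have "\<dots> \<le> 1" using r by simp
    finally have "(1 - r / q) / q \<le> 1" .
    then have "diameter U powr (ln r / ln q) \<le> diameter U powr s"
      using U assms(5) by (intro powr_mono') auto
    then show "\<exists>c l. {x \<in> {0..M}. rebase q r x \<in> U} \<subseteq> {c .. c + l} \<and> 0 \<le> l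
        \<and> l \<le> K * diameter U powr s"
      using al J \<open>0 < K\<close> by (intro exI[of _ a] exI[of _ l]) (auto intro: order_trans)
  qed
qed

lemma G_set_subset_interval:
  assumes "1 < r" "r \<le> q"
  shows "G_set r q \<subseteq> {0 .. real (digit_bound q) / (q - 1)}"
proof
  fix z assume "z \<in> G_set r q"
  then obtain x where x: "x \<in> greedy_interval r" "z = rebase q r x" by (auto simp: G_set_eq_image_rebase)
  then have "0 \<le> x" using assms by (simp add: greedy_interval_eq)
  have "real (digit_bound r) / (q - 1) \<le> real (digit_bound q) / (q - 1)"
    using assms digit_bound_mono[of r q] by (intro divide_right_mono) auto
  then show "z \<in> {0 .. real (digit_bound q) / (q - 1)}"
    using rebase_nonneg[of q x r] rebase_le[of q x r] assms \<open>0 \<le> x\<close> x(2) by auto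
qed

lemma hausdorff_dim_G_set:
  assumes r: "1 < r" "r < q"
  shows "hausdorff_dim (G_set r q) = ereal (ln r / ln q)"
proof (rule hausdorff_dim_eqI)
  have q: "1 < q" using r by simp
  show "0 \<le> ln r / ln q" using r q by simp
  show "hausdorff_measure s (G_set r q) \<noteq> 0" if "0 \<le> s" "s < ln r / ln q" for s
    using hausdorff_measure_pos_if_G_set_subset[OF r order_refl] that by simp
  show "hausdorff_measure s (G_set r q) = 0" if s: "ln r / ln q < s" for s
  proof -
    have "q powr (ln r / ln q) = r" using r q by (simp add: powr_def)
    then have "r < q powr s" using powr_less_mono[OF s q] by simp
    define b where "b = (r + q powr s) / 2"
    have b: "1 < b" "r < b" "b < q powr s" using \<open>r < q powr s\<close> r by (auto simp: b_def)
    have "small_interval_covers s (\<Union>r'\<in>{r}. G_set r' q)"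
      by (rule small_interval_covers_greedy_union[OF q b, where c="digit_bound r"]) (use r in auto)
    then show ?thesis by (simp add: hausdorff_measure_zero_if_small_interval_covers)
  qed
qed

text \<open>The pieces are grouped by digit bound because the separation of prefixes
  (greedy_prefix_gap) needs a common digit bound.\<close>
definition G_piece :: "real \<Rightarrow> nat \<Rightarrow> real \<Rightarrow> real set" where
  "G_piece q c t = (\<Union>r\<in>{r. 1 < r \<and> digit_bound r = c \<and> r \<le> t}. G_set r q)"

lemma greedy_union_eq_UN_G_piece:
  "(\<Union>r\<in>{1<..<q}. G_set r q) = (\<Union>p. G_piece q (fst p) (q - 1 / real (Suc (snd p))))"
proof (intro equalityI subsetI)
  fix z assume "z \<in> (\<Union>r\<in>{1<..<q}. G_set r q)"
  then obtain r where r: "1 < r" "r < q" "z \<in> G_set r q" by auto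
  obtain j where "1 / real (Suc j) < q - r"
    using reals_Archimedean[of "q - r"] r by (auto simp: field_simps)
  then show "z \<in> (\<Union>p. G_piece q (fst p) (q - 1 / real (Suc (snd p))))"
    using r by (intro UN_I[of "(digit_bound r, j)"]) (auto simp: G_piece_def)
next
  fix z assume "z \<in> (\<Union>p. G_piece q (fst p) (q - 1 / real (Suc (snd p))))"
  then obtain r j where r: "1 < r" "r \<le> q - 1 / real (Suc j)" "z \<in> G_set r q"
    by (auto simp: G_piece_def)
  have "0 < 1 / real (Suc j)" by simp
  then have "r < q" using r(2) by linarith
  then show "z \<in> (\<Union>r\<in>{1<..<q}. G_set r q)" using r by (intro UN_I[of r]) auto
qed

lemma closure_G_piece_null:
  assumes "1 < q" "t < q"
  shows "closure (G_piece q c t) \<in> null_sets lborel"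
  unfolding G_piece_def
proof (rule closure_null_if_small_interval_covers, rule small_interval_covers_greedy_union)
  define b where "b = (max 1 t + q) / 2"
  show "1 < q" "1 < b" "max 1 t < b" "b < q powr 1" using assms by (auto simp: b_def)
qed auto

lemma hausdorff_dim_greedy_union:
  assumes q: "1 < q"
  shows "hausdorff_dim (\<Union>r\<in>{1<..<q}. G_set r q) = 1"
proof -
  have "hausdorff_dim (\<Union>r\<in>{1<..<q}. G_set r q) = ereal 1"
  proof (rule hausdorff_dim_eqI)
    show "hausdorff_measure s (\<Union>r\<in>{1<..<q}. G_set r q) \<noteq> 0" if "0 \<le> s" "s < 1" for s
    proof -
      obtain s' where s': "s < s'" "s' < 1" using dense \<open>s < 1\<close> by blast
      define r where "r = q powr s'"
      have "q powr 0 < q powr s'" using s' that q by (intro powr_less_mono) auto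
      moreover have "q powr s' < q powr 1" using s' q by (intro powr_less_mono) auto
      ultimately have r: "1 < r" "r < q" using q by (simp_all add: r_def)
      then have "G_set r q \<subseteq> (\<Union>r\<in>{1<..<q}. G_set r q)" by (intro UN_upper) auto
      moreover have "s \<le> ln r / ln q" using q s' by (simp add: r_def ln_powr)
      ultimately show ?thesis using hausdorff_measure_pos_if_G_set_subset[OF r _ \<open>0 \<le> s\<close>] by blast
    qed
    have "(\<Union>r\<in>{1<..<q}. G_set r q) \<subseteq> {0 .. real (digit_bound q) / (q - 1)}"
      using G_set_subset_interval by (intro UN_least) auto
    then have "bounded (\<Union>r\<in>{1<..<q}. G_set r q)"
      by (rule bounded_subset[OF bounded_closed_interval])
    then show "hausdorff_measure s (\<Union>r\<in>{1<..<q}. G_set r q) = 0" if "1 < s" for s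
      using that by (intro hausdorff_measure_zero_if_small_interval_covers small_interval_covers_bounded)
  qed simp
  then show ?thesis by simp
qed

theorem theorem2p7:
  fixes q :: real
  assumes "q > 1"
  shows "(\<forall>r \<in> {1<..<q}. hausdorff_dim (G_set r q) = ereal (ln r / ln q))
       \<and> first_category (\<Union>r \<in> {1<..<q}. G_set r q)
       \<and> (\<Union>r \<in> {1<..<q}. G_set r q) \<in> null_sets lebesgue
       \<and> hausdorff_dim (\<Union>r \<in> {1<..<q}. G_set r q) = 1"
proof -
  have "closure (G_piece q (fst p) (q - 1 / real (Suc (snd p)))) \<in> null_sets lborel" for p
    using assms by (intro closure_G_piece_null) auto
  note pieces = first_category_null_if_closures_null[OF this]
  show ?thesis
    using hausdorff_dim_G_set pieces hausdorff_dim_greedy_union[OF assms]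
    unfolding greedy_union_eq_UN_G_piece by auto
qed

end
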